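(* Let $\nabla$ be a connection on an anchored vector bundle $(A,a_A)$ over $M$, let $[x,y]^\nabla=\nabla_xy-\nabla_yx$, and let $R^\nabla(x,y)z=\nabla_x\nabla_yz-\nabla_y\nabla_xz-\nabla_{[x,y]^\nabla}z$. The following are equivalent: (1) for all $x,y\in\Gamma(A)$ the map $z\mapsto R^\nabla(x,y)z$ is $C^\infty(M)$-linear; (2) $(A,[\cdot,\cdot]^\nabla,a_A)$ is a dull algebroid.
   Context: A connection on the anchored bundle $(A,a_A)$ (with $a_A:A\to TM$ a bundle map) is an $\mathbb{R}$-bilinear operator $\nabla:\Gamma(A)\times\Gamma(A)\to\Gamma(A)$ with $\nabla_{fx}y=f\nabla_xy$ and $\nabla_x(fy)=a_A(x)(f)\,y+f\nabla_xy$. A dull algebroid is a triple $(A,[\cdot,\cdot],a_A)$ where $[\cdot,\cdot]$ is a skew-symmetric $\mathbb{R}$-bilinear bracket on $\Gamma(A)$ with $[x,fy]=f[x,y]+a_A(x)(f)y$ and additionally $a_A([x,y])=[a_A(x),a_A(y)]$ for all $x,y\in\Gamma(A)$. *)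

theory Defs
  imports "HOL-Analysis.Analysis"
begin

fun dderiv :: "'a list \<Rightarrow> ('a::real_normed_vector \<Rightarrow> 'b::real_normed_vector) \<Rightarrow> 'a \<Rightarrow> 'b" where
  "dderiv [] f = f"
| "dderiv (v # vs) f = (\<lambda>x. frechet_derivative (dderiv vs f) (at x) v)"

definition smooth_on :: "'a::euclidean_space set \<Rightarrow> ('a \<Rightarrow> 'b::real_normed_vector) \<Rightarrow> bool" where
  "smooth_on S f \<longleftrightarrow> open S \<and> (\<forall>vs. \<forall>x\<in>S. dderiv vs f differentiable (at x))"

definition smooth_manifold :: "'M topology \<Rightarrow> ('M set \<times> ('M \<Rightarrow> 'e::euclidean_space)) set \<Rightarrow> bool" where
  "smooth_manifold X Atl \<longleftrightarrow>
     topspace X = UNIV \<and> Hausdorff_space X \<and> second_countable X \<and>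
     \<Union> (fst ` Atl) = UNIV \<and>
     (\<forall>(U, \<phi>) \<in> Atl. openin X U \<and> open (\<phi> ` U) \<and>
        homeomorphic_map (subtopology X U) (top_of_set (\<phi> ` U)) \<phi>) \<and>
     (\<forall>(U, \<phi>) \<in> Atl. \<forall>(V, \<psi>) \<in> Atl. smooth_on (\<phi> ` (U \<inter> V)) (\<psi> \<circ> inv_into U \<phi>))"

definition smooth_map_on :: "('M set \<times> ('M \<Rightarrow> 'e::euclidean_space)) set \<Rightarrow> 'M set \<Rightarrow> ('M \<Rightarrow> 'b::real_normed_vector) \<Rightarrow> bool" where
  "smooth_map_on Atl W f \<longleftrightarrow> (\<forall>(U, \<phi>) \<in> Atl. smooth_on (\<phi> ` (U \<inter> W)) (f \<circ> inv_into U \<phi>))"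

definition smooth_fun :: "('M set \<times> ('M \<Rightarrow> 'e::euclidean_space)) set \<Rightarrow> ('M \<Rightarrow> real) \<Rightarrow> bool" where
  "smooth_fun Atl f \<longleftrightarrow> smooth_map_on Atl UNIV f"

text \<open>Vector fields, as derivations of C^\<infinity>(M).\<close>
definition vector_field :: "('M set \<times> ('M \<Rightarrow> 'e::euclidean_space)) set \<Rightarrow> (('M \<Rightarrow> real) \<Rightarrow> ('M \<Rightarrow> real)) \<Rightarrow> bool" where
  "vector_field Atl D \<longleftrightarrow>
     (\<forall>f. smooth_fun Atl f \<longrightarrow> smooth_fun Atl (D f)) \<and>
     (\<forall>f g. smooth_fun Atl f \<longrightarrow> smooth_fun Atl g \<longrightarrow> D (\<lambda>p. f p + g p) = (\<lambda>p. D f p + D g p)) \<and>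
     (\<forall>c f. smooth_fun Atl f \<longrightarrow> D (\<lambda>p. c * f p) = (\<lambda>p. c * D f p)) \<and>
     (\<forall>f g. smooth_fun Atl f \<longrightarrow> smooth_fun Atl g \<longrightarrow> D (\<lambda>p. f p * g p) = (\<lambda>p. f p * D g p + g p * D f p))"

text \<open>Trivialising cover U indexed by 'i, fibre 'v, transition functions g i j on U i \<inter> U j;
  a local representative s i of a section satisfies s i = g i j (s j) on overlaps.\<close>
definition vector_bundle ::
  "'M topology \<Rightarrow> ('M set \<times> ('M \<Rightarrow> 'e::euclidean_space)) set \<Rightarrow> ('i \<Rightarrow> 'M set) \<Rightarrow>
   ('i \<Rightarrow> 'i \<Rightarrow> 'M \<Rightarrow> ('v::euclidean_space \<Rightarrow>\<^sub>L 'v)) \<Rightarrow> bool" where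
  "vector_bundle X Atl U g \<longleftrightarrow>
     smooth_manifold X Atl \<and> (\<forall>i. openin X (U i)) \<and> (\<Union>i. U i) = UNIV \<and>
     (\<forall>i j. smooth_map_on Atl (U i \<inter> U j) (g i j)) \<and>
     (\<forall>i p. p \<in> U i \<longrightarrow> g i i p = id_blinfun) \<and>
     (\<forall>i j k p. p \<in> U i \<inter> U j \<inter> U k \<longrightarrow> g i j p o\<^sub>L g j k p = g i k p)"

text \<open>\<Gamma>(A): smooth sections, as compatible families of local representatives (zero off U i).\<close>
definition sections ::
  "('M set \<times> ('M \<Rightarrow> 'e::euclidean_space)) set \<Rightarrow> ('i \<Rightarrow> 'M set) \<Rightarrow>
   ('i \<Rightarrow> 'i \<Rightarrow> 'M \<Rightarrow> ('v::euclidean_space \<Rightarrow>\<^sub>L 'v)) \<Rightarrow> ('i \<Rightarrow> 'M \<Rightarrow> 'v) set" where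
  "sections Atl U g = {s. (\<forall>i p. p \<notin> U i \<longrightarrow> s i p = 0) \<and>
                          (\<forall>i. smooth_map_on Atl (U i) (s i)) \<and>
                          (\<forall>i j p. p \<in> U i \<inter> U j \<longrightarrow> s i p = blinfun_apply (g i j p) (s j p))}"

definition sec_add :: "('i \<Rightarrow> 'M \<Rightarrow> 'v::real_vector) \<Rightarrow> ('i \<Rightarrow> 'M \<Rightarrow> 'v) \<Rightarrow> ('i \<Rightarrow> 'M \<Rightarrow> 'v)" where
  "sec_add s t = (\<lambda>i p. s i p + t i p)"

definition sec_diff :: "('i \<Rightarrow> 'M \<Rightarrow> 'v::real_vector) \<Rightarrow> ('i \<Rightarrow> 'M \<Rightarrow> 'v) \<Rightarrow> ('i \<Rightarrow> 'M \<Rightarrow> 'v)" where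
  "sec_diff s t = (\<lambda>i p. s i p - t i p)"

definition sec_smult :: "('M \<Rightarrow> real) \<Rightarrow> ('i \<Rightarrow> 'M \<Rightarrow> 'v::real_vector) \<Rightarrow> ('i \<Rightarrow> 'M \<Rightarrow> 'v)" where
  "sec_smult f s = (\<lambda>i p. f p *\<^sub>R s i p)"

definition sec_scale :: "real \<Rightarrow> ('i \<Rightarrow> 'M \<Rightarrow> 'v::real_vector) \<Rightarrow> ('i \<Rightarrow> 'M \<Rightarrow> 'v)" where
  "sec_scale c s = (\<lambda>i p. c *\<^sub>R s i p)"

text \<open>An anchor a_A : A \<rightarrow> TM, represented (as usual) by the induced C^\<infinity>(M)-linear map
  \<Gamma>(A) \<rightarrow> \<X>(M) on sections; a(x)(f) is the derivative of f along a(x).\<close>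
definition anchored_bundle ::
  "'M topology \<Rightarrow> ('M set \<times> ('M \<Rightarrow> 'e::euclidean_space)) set \<Rightarrow> ('i \<Rightarrow> 'M set) \<Rightarrow>
   ('i \<Rightarrow> 'i \<Rightarrow> 'M \<Rightarrow> ('v::euclidean_space \<Rightarrow>\<^sub>L 'v)) \<Rightarrow>
   (('i \<Rightarrow> 'M \<Rightarrow> 'v) \<Rightarrow> ('M \<Rightarrow> real) \<Rightarrow> ('M \<Rightarrow> real)) \<Rightarrow> bool" where
  "anchored_bundle X Atl U g a \<longleftrightarrow>
     vector_bundle X Atl U g \<and>
     (\<forall>x \<in> sections Atl U g. vector_field Atl (a x)) \<and>
     (\<forall>x \<in> sections Atl U g. \<forall>y \<in> sections Atl U g. \<forall>h. smooth_fun Atl h \<longrightarrow>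
         a (sec_add x y) h = (\<lambda>p. a x h p + a y h p)) \<and>
     (\<forall>x \<in> sections Atl U g. \<forall>f h. smooth_fun Atl f \<longrightarrow> smooth_fun Atl h \<longrightarrow>
         a (sec_smult f x) h = (\<lambda>p. f p * a x h p))"

definition connection ::
  "'M topology \<Rightarrow> ('M set \<times> ('M \<Rightarrow> 'e::euclidean_space)) set \<Rightarrow> ('i \<Rightarrow> 'M set) \<Rightarrow>
   ('i \<Rightarrow> 'i \<Rightarrow> 'M \<Rightarrow> ('v::euclidean_space \<Rightarrow>\<^sub>L 'v)) \<Rightarrow>
   (('i \<Rightarrow> 'M \<Rightarrow> 'v) \<Rightarrow> ('M \<Rightarrow> real) \<Rightarrow> ('M \<Rightarrow> real)) \<Rightarrow>
   (('i \<Rightarrow> 'M \<Rightarrow> 'v) \<Rightarrow> ('i \<Rightarrow> 'M \<Rightarrow> 'v) \<Rightarrow> ('i \<Rightarrow> 'M \<Rightarrow> 'v)) \<Rightarrow> bool" where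
  "connection X Atl U g a nabla \<longleftrightarrow>
     (let \<Gamma> = sections Atl U g in
     (\<forall>x\<in>\<Gamma>. \<forall>y\<in>\<Gamma>. nabla x y \<in> \<Gamma>) \<and>
     (\<forall>x\<in>\<Gamma>. \<forall>x'\<in>\<Gamma>. \<forall>y\<in>\<Gamma>. nabla (sec_add x x') y = sec_add (nabla x y) (nabla x' y)) \<and>
     (\<forall>x\<in>\<Gamma>. \<forall>y\<in>\<Gamma>. \<forall>y'\<in>\<Gamma>. nabla x (sec_add y y') = sec_add (nabla x y) (nabla x y')) \<and>
     (\<forall>c. \<forall>x\<in>\<Gamma>. \<forall>y\<in>\<Gamma>. nabla (sec_scale c x) y = sec_scale c (nabla x y)) \<and>
     (\<forall>c. \<forall>x\<in>\<Gamma>. \<forall>y\<in>\<Gamma>. nabla x (sec_scale c y) = sec_scale c (nabla x y)) \<and>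
     (\<forall>f. smooth_fun Atl f \<longrightarrow> (\<forall>x\<in>\<Gamma>. \<forall>y\<in>\<Gamma>. nabla (sec_smult f x) y = sec_smult f (nabla x y))) \<and>
     (\<forall>f. smooth_fun Atl f \<longrightarrow> (\<forall>x\<in>\<Gamma>. \<forall>y\<in>\<Gamma>.
         nabla x (sec_smult f y) = sec_add (sec_smult (a x f) y) (sec_smult f (nabla x y)))))"

definition dull_algebroid ::
  "'M topology \<Rightarrow> ('M set \<times> ('M \<Rightarrow> 'e::euclidean_space)) set \<Rightarrow> ('i \<Rightarrow> 'M set) \<Rightarrow>
   ('i \<Rightarrow> 'i \<Rightarrow> 'M \<Rightarrow> ('v::euclidean_space \<Rightarrow>\<^sub>L 'v)) \<Rightarrow>
   (('i \<Rightarrow> 'M \<Rightarrow> 'v) \<Rightarrow> ('i \<Rightarrow> 'M \<Rightarrow> 'v) \<Rightarrow> ('i \<Rightarrow> 'M \<Rightarrow> 'v)) \<Rightarrow>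
   (('i \<Rightarrow> 'M \<Rightarrow> 'v) \<Rightarrow> ('M \<Rightarrow> real) \<Rightarrow> ('M \<Rightarrow> real)) \<Rightarrow> bool" where
  "dull_algebroid X Atl U g br a \<longleftrightarrow>
     anchored_bundle X Atl U g a \<and>
     (let \<Gamma> = sections Atl U g in
     (\<forall>x\<in>\<Gamma>. \<forall>y\<in>\<Gamma>. br x y \<in> \<Gamma>) \<and>
     (\<forall>x\<in>\<Gamma>. \<forall>y\<in>\<Gamma>. br x y = sec_scale (-1) (br y x)) \<and>
     (\<forall>x\<in>\<Gamma>. \<forall>y\<in>\<Gamma>. \<forall>y'\<in>\<Gamma>. br x (sec_add y y') = sec_add (br x y) (br x y')) \<and>
     (\<forall>c. \<forall>x\<in>\<Gamma>. \<forall>y\<in>\<Gamma>. br x (sec_scale c y) = sec_scale c (br x y)) \<and>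
     (\<forall>f. smooth_fun Atl f \<longrightarrow> (\<forall>x\<in>\<Gamma>. \<forall>y\<in>\<Gamma>.
         br x (sec_smult f y) = sec_add (sec_smult f (br x y)) (sec_smult (a x f) y))) \<and>
     (\<forall>x\<in>\<Gamma>. \<forall>y\<in>\<Gamma>. \<forall>h. smooth_fun Atl h \<longrightarrow>
         a (br x y) h = (\<lambda>p. a x (a y h) p - a y (a x h) p)))"

definition nabla_bracket :: "(('i \<Rightarrow> 'M \<Rightarrow> 'v::real_vector) \<Rightarrow> ('i \<Rightarrow> 'M \<Rightarrow> 'v) \<Rightarrow> ('i \<Rightarrow> 'M \<Rightarrow> 'v)) \<Rightarrow>
   ('i \<Rightarrow> 'M \<Rightarrow> 'v) \<Rightarrow> ('i \<Rightarrow> 'M \<Rightarrow> 'v) \<Rightarrow> ('i \<Rightarrow> 'M \<Rightarrow> 'v)" where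
  "nabla_bracket nabla x y = sec_diff (nabla x y) (nabla y x)"

definition curvature :: "(('i \<Rightarrow> 'M \<Rightarrow> 'v::real_vector) \<Rightarrow> ('i \<Rightarrow> 'M \<Rightarrow> 'v) \<Rightarrow> ('i \<Rightarrow> 'M \<Rightarrow> 'v)) \<Rightarrow>
   ('i \<Rightarrow> 'M \<Rightarrow> 'v) \<Rightarrow> ('i \<Rightarrow> 'M \<Rightarrow> 'v) \<Rightarrow> ('i \<Rightarrow> 'M \<Rightarrow> 'v) \<Rightarrow> ('i \<Rightarrow> 'M \<Rightarrow> 'v)" where
  "curvature nabla x y z =
     sec_diff (sec_diff (nabla x (nabla y z)) (nabla y (nabla x z))) (nabla (nabla_bracket nabla x y) z)"

end

theory Submission
  imports Defs
begin

text \<open>For any connection, \<open>R\<^sup>\<nabla>(x,y)\<close> is additive in \<open>z\<close>, and the Leibniz rule gives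
  \<open>R\<^sup>\<nabla>(x,y)(f z) = (a(x)(a(y) f) - a(y)(a(x) f) - a([x,y]\<^sup>\<nabla>) f) z + f R\<^sup>\<nabla>(x,y) z\<close>.
  The bracket \<open>[x,y]\<^sup>\<nabla>\<close> satisfies every axiom of a dull algebroid except compatibility
  with the anchor, so both conditions say that the coefficient \<open>a(x)(a(y) f) - a(y)(a(x) f) -
  a([x,y]\<^sup>\<nabla>) f\<close> vanishes. That it must vanish at a point \<open>p\<close> once the curvature is
  \<open>C\<^sup>\<infinity>(M)\<close>-linear is seen on a section not vanishing at \<open>p\<close>; such a section is a bump
  function in a chart around \<open>p\<close> times a constant vector of a trivialisation.\<close>

section \<open>Smoothness on open subsets of euclidean space\<close>

lemma has_derivative_cong_open:
  assumes "open S" "x \<in> S" "\<And>y. y \<in> S \<Longrightarrow> F y = G y"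
  shows "(F has_derivative D) (at x) \<longleftrightarrow> (G has_derivative D) (at x)"
  using has_derivative_transform_within_open[of F D x UNIV S G]
    has_derivative_transform_within_open[of G D x UNIV S F] assms by auto

lemma dderiv_cong_open:
  assumes "open S" "\<And>y. y \<in> S \<Longrightarrow> F y = G y" "x \<in> S"
  shows "dderiv vs F x = dderiv vs G x"
  using assms(3)
proof (induction vs arbitrary: x)
  case (Cons v vs)
  have "(dderiv vs F has_derivative D) (at x) \<longleftrightarrow> (dderiv vs G has_derivative D) (at x)" for D
    using has_derivative_cong_open[OF assms(1) Cons.prems] Cons.IH by blast
  then show ?case
    by (simp add: frechet_derivative_def)
qed (use assms in simp)

lemma dderiv_append: "dderiv (vs @ ws) F = dderiv vs (dderiv ws F)"
  by (induction vs) auto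

lemma dderiv_single_eq: "(F has_derivative D) (at x) \<Longrightarrow> dderiv [v] F x = D v"
  by (simp add: frechet_derivative_at[symmetric])

text \<open>A graded version of \<^const>\<open>smooth_on\<close>, so that closure properties can be proved by induction
  on the order.\<close>

definition smooth_upto :: "nat \<Rightarrow> 'a::euclidean_space set \<Rightarrow> ('a \<Rightarrow> 'b::real_normed_vector) \<Rightarrow> bool" where
  "smooth_upto n S F \<longleftrightarrow> open S \<and> (\<forall>vs. length vs \<le> n \<longrightarrow> (\<forall>x\<in>S. dderiv vs F differentiable (at x)))"

lemma smooth_on_iff_smooth_upto: "smooth_on S F \<longleftrightarrow> (\<forall>n. smooth_upto n S F)"
  unfolding smooth_on_def smooth_upto_def by blast

lemma smooth_upto_open: "smooth_upto n S F \<Longrightarrow> open S"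
  by (simp add: smooth_upto_def)

lemma smooth_upto_differentiable: "smooth_upto n S F \<Longrightarrow> x \<in> S \<Longrightarrow> F differentiable (at x)"
  unfolding smooth_upto_def by (metis dderiv.simps(1) le0 list.size(3))

lemma smooth_upto_0_iff: "smooth_upto 0 S F \<longleftrightarrow> open S \<and> (\<forall>x\<in>S. F differentiable (at x))"
  by (auto simp: smooth_upto_def)

lemma smooth_upto_SucI:
  assumes "\<And>x. x \<in> S \<Longrightarrow> F differentiable (at x)" "\<And>v. smooth_upto n S (dderiv [v] F)"
  shows "smooth_upto (Suc n) S F"
  unfolding smooth_upto_def
proof (intro conjI allI impI ballI)
  show "open S"
    using assms(2) smooth_upto_open by blast
next
  fix vs :: "'a list" and x
  assume "length vs \<le> Suc n" "x \<in> S"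
  then show "dderiv vs F differentiable (at x)"
    using assms by (cases vs rule: rev_exhaust) (auto simp: dderiv_append smooth_upto_def)
qed

lemma smooth_upto_SucD: "smooth_upto (Suc n) S F \<Longrightarrow> smooth_upto n S (dderiv [v] F)"
  unfolding smooth_upto_def by (metis dderiv_append length_append_singleton not_less_eq_eq)

lemma smooth_upto_mono: "smooth_upto n S F \<Longrightarrow> m \<le> n \<Longrightarrow> smooth_upto m S F"
  unfolding smooth_upto_def by auto

lemma smooth_upto_subset: "smooth_upto n S F \<Longrightarrow> T \<subseteq> S \<Longrightarrow> open T \<Longrightarrow> smooth_upto n T F"
  unfolding smooth_upto_def by auto

lemma smooth_upto_cong:
  assumes "smooth_upto n S F" "\<And>y. y \<in> S \<Longrightarrow> F y = G y"
  shows "smooth_upto n S G"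
  unfolding smooth_upto_def
proof (intro conjI allI impI ballI)
  show "open S"
    using assms(1) smooth_upto_open by blast
  fix vs :: "'a list" and x
  assume "length vs \<le> n" "x \<in> S"
  moreover have "\<And>y. y \<in> S \<Longrightarrow> dderiv vs F y = dderiv vs G y"
    using dderiv_cong_open[OF \<open>open S\<close> assms(2)] .
  ultimately show "dderiv vs G differentiable (at x)"
    using assms(1) has_derivative_cong_open[OF \<open>open S\<close>]
    unfolding smooth_upto_def differentiable_def by metis
qed

lemma smooth_upto_const: "open S \<Longrightarrow> smooth_upto n S (\<lambda>_. c)"
proof (induction n arbitrary: c)
  case (Suc n)
  have "dderiv [v] (\<lambda>_. c) = (\<lambda>_. 0)" for v :: 'a
    by auto
  then show ?case
    using Suc by (intro smooth_upto_SucI) auto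
qed (simp add: smooth_upto_0_iff)

lemma smooth_upto_ident: "open S \<Longrightarrow> smooth_upto n S (\<lambda>x. x)"
proof (induction n)
  case (Suc n)
  have "dderiv [v] (\<lambda>x. x) = (\<lambda>_. v)" for v :: 'a
    by auto
  then show ?case
    using Suc smooth_upto_const by (intro smooth_upto_SucI) auto
qed (simp add: smooth_upto_0_iff)

lemma smooth_upto_has_derivative:
  "smooth_upto n S F \<Longrightarrow> x \<in> S \<Longrightarrow> (F has_derivative frechet_derivative F (at x)) (at x)"
  using smooth_upto_differentiable frechet_derivative_works by blast

lemma smooth_upto_add:
  "smooth_upto n S F \<Longrightarrow> smooth_upto n S G \<Longrightarrow> smooth_upto n S (\<lambda>x. F x + G x)"
proof (induction n arbitrary: F G)
  case 0
  then show ?case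
    by (simp add: smooth_upto_0_iff)
next
  case (Suc n)
  show ?case
  proof (rule smooth_upto_SucI)
    fix x
    assume "x \<in> S"
    then show "(\<lambda>x. F x + G x) differentiable (at x)"
      using Suc.prems smooth_upto_differentiable by (blast intro: differentiable_add)
  next
    fix v
    have eq: "dderiv [v] (\<lambda>x. F x + G x) x = dderiv [v] F x + dderiv [v] G x" if "x \<in> S" for x
      using dderiv_single_eq[OF has_derivative_add[OF
          smooth_upto_has_derivative[OF Suc.prems(1) that] smooth_upto_has_derivative[OF Suc.prems(2) that]]]
      by simp
    have "smooth_upto n S (\<lambda>x. dderiv [v] F x + dderiv [v] G x)"
      using Suc.IH Suc.prems smooth_upto_SucD by blast
    then show "smooth_upto n S (dderiv [v] (\<lambda>x. F x + G x))"
      by (rule smooth_upto_cong) (simp only: eq)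
  qed
qed

lemma smooth_upto_linear:
  assumes "bounded_linear L"
  shows "smooth_upto n S F \<Longrightarrow> smooth_upto n S (\<lambda>x. L (F x))"
proof (induction n arbitrary: F)
  case 0
  then show ?case
    using differentiable_compose[OF bounded_linear_imp_differentiable[OF assms]]
    by (auto simp: smooth_upto_0_iff)
next
  case (Suc n)
  show ?case
  proof (rule smooth_upto_SucI)
    fix x
    assume "x \<in> S"
    then show "(\<lambda>x. L (F x)) differentiable (at x)"
      by (rule differentiable_compose[OF bounded_linear_imp_differentiable[OF assms]
            smooth_upto_differentiable[OF Suc.prems]])
  next
    fix v
    have eq: "dderiv [v] (\<lambda>x. L (F x)) x = L (dderiv [v] F x)" if "x \<in> S" for x
      using dderiv_single_eq[OF bounded_linear.has_derivative[OF assms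
          smooth_upto_has_derivative[OF Suc.prems that]]]
      by simp
    have "smooth_upto n S (\<lambda>x. L (dderiv [v] F x))"
      using Suc.IH Suc.prems smooth_upto_SucD by blast
    then show "smooth_upto n S (dderiv [v] (\<lambda>x. L (F x)))"
      by (rule smooth_upto_cong) (simp only: eq)
  qed
qed

lemma differentiable_bilinear:
  assumes "bounded_bilinear pr" "F differentiable (at x)" "G differentiable (at x)"
  shows "(\<lambda>x. pr (F x) (G x)) differentiable (at x)"
  using bounded_bilinear.FDERIV[OF assms(1) assms(2,3)[THEN frechet_derivative_works[THEN iffD1]]]
  unfolding differentiable_def by blast

lemma smooth_upto_bilinear:
  assumes "bounded_bilinear pr"
  shows "smooth_upto n S F \<Longrightarrow> smooth_upto n S G \<Longrightarrow> smooth_upto n S (\<lambda>x. pr (F x) (G x))"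
proof (induction n arbitrary: F G)
  case 0
  then show ?case
    by (auto simp: smooth_upto_0_iff intro: differentiable_bilinear[OF assms])
next
  case (Suc n)
  show ?case
  proof (rule smooth_upto_SucI)
    fix x
    assume "x \<in> S"
    then show "(\<lambda>x. pr (F x) (G x)) differentiable (at x)"
      using Suc.prems by (intro differentiable_bilinear[OF assms] smooth_upto_differentiable)
  next
    fix v
    have eq: "dderiv [v] (\<lambda>x. pr (F x) (G x)) x = pr (F x) (dderiv [v] G x) + pr (dderiv [v] F x) (G x)"
      if "x \<in> S" for x
      using dderiv_single_eq[OF bounded_bilinear.FDERIV[OF assms
          smooth_upto_has_derivative[OF Suc.prems(1) that] smooth_upto_has_derivative[OF Suc.prems(2) that]]]
      by simp
    have F: "smooth_upto n S F" and G: "smooth_upto n S G"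
      using smooth_upto_mono[OF Suc.prems(1)] smooth_upto_mono[OF Suc.prems(2)] by simp_all
    have "smooth_upto n S (\<lambda>x. pr (F x) (dderiv [v] G x) + pr (dderiv [v] F x) (G x))"
      using smooth_upto_add[OF Suc.IH[OF F smooth_upto_SucD[OF Suc.prems(2)]]
          Suc.IH[OF smooth_upto_SucD[OF Suc.prems(1)] G]] .
    then show "smooth_upto n S (dderiv [v] (\<lambda>x. pr (F x) (G x)))"
      by (rule smooth_upto_cong) (simp only: eq)
  qed
qed

lemma smooth_upto_diff:
  "smooth_upto n S F \<Longrightarrow> smooth_upto n S G \<Longrightarrow> smooth_upto n S (\<lambda>x. F x - G x)"
  using smooth_upto_add[OF _ smooth_upto_linear[OF bounded_linear_minus[OF bounded_linear_ident]]]
  by fastforce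

lemma smooth_upto_sum:
  assumes "finite A" "open S" "\<And>b. b \<in> A \<Longrightarrow> smooth_upto n S (H b)"
  shows "smooth_upto n S (\<lambda>x. \<Sum>b\<in>A. H b x)"
  using assms(1,3)
  by (induction A rule: finite_induct) (auto intro: smooth_upto_add smooth_upto_const[OF assms(2)])

lemma linear_basis_expansion:
  fixes f :: "'a::euclidean_space \<Rightarrow> 'b::real_vector"
  assumes "linear f"
  shows "f x = (\<Sum>b\<in>Basis. (x \<bullet> b) *\<^sub>R f b)"
proof -
  interpret linear f by fact
  have "f x = f (\<Sum>b\<in>Basis. (x \<bullet> b) *\<^sub>R b)"
    by (simp add: euclidean_representation)
  also have "\<dots> = (\<Sum>b\<in>Basis. (x \<bullet> b) *\<^sub>R f b)"
    by (simp add: sum scale)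
  finally show ?thesis .
qed

lemma smooth_upto_compose:
  fixes F :: "'b::euclidean_space \<Rightarrow> 'c::real_normed_vector" and G :: "'a::euclidean_space \<Rightarrow> 'b"
  shows "smooth_upto n T F \<Longrightarrow> smooth_upto n S G \<Longrightarrow> G ` S \<subseteq> T \<Longrightarrow> smooth_upto n S (\<lambda>x. F (G x))"
proof (induction n arbitrary: F)
  case 0
  have "(\<lambda>x. F (G x)) differentiable (at x)" if "x \<in> S" for x
    using 0(3) that by (intro differentiable_compose[of F G x] smooth_upto_differentiable[OF 0(1)]
        smooth_upto_differentiable[OF 0(2)]) auto
  then show ?case
    using smooth_upto_open[OF 0(2)] by (simp add: smooth_upto_0_iff)
next
  case (Suc n)
  show ?case
  proof (rule smooth_upto_SucI)
    fix x
    assume "x \<in> S"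
    then show "(\<lambda>x. F (G x)) differentiable (at x)"
      using Suc.prems(3) by (intro differentiable_compose[of F G x] smooth_upto_differentiable[OF Suc.prems(1)]
          smooth_upto_differentiable[OF Suc.prems(2)]) auto
  next
    fix v
    have eq: "dderiv [v] (\<lambda>x. F (G x)) x = (\<Sum>b\<in>Basis. (dderiv [v] G x \<bullet> b) *\<^sub>R dderiv [b] F (G x))"
      if "x \<in> S" for x
    proof -
      have dF: "(F has_derivative frechet_derivative F (at (G x))) (at (G x))"
        using smooth_upto_has_derivative Suc.prems(1,3) that by blast
      have "dderiv [v] (\<lambda>x. F (G x)) x = frechet_derivative F (at (G x)) (dderiv [v] G x)"
        using dderiv_single_eq[OF diff_chain_at[OF smooth_upto_has_derivative[OF Suc.prems(2) that] dF]]
        by (simp add: o_def)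
      also have "\<dots> = (\<Sum>b\<in>Basis. (dderiv [v] G x \<bullet> b) *\<^sub>R dderiv [b] F (G x))"
        using linear_basis_expansion has_derivative_linear[OF dF] by simp
      finally show ?thesis .
    qed
    have "smooth_upto n S (\<lambda>x. \<Sum>b\<in>Basis. (dderiv [v] G x \<bullet> b) *\<^sub>R dderiv [b] F (G x))"
    proof (rule smooth_upto_sum[OF finite_Basis smooth_upto_open[OF Suc.prems(2)]])
      fix b :: 'b
      have "smooth_upto n S (\<lambda>x. dderiv [v] G x \<bullet> b)"
        by (rule smooth_upto_linear[OF bounded_linear_inner_left smooth_upto_SucD[OF Suc.prems(2)]])
      moreover have "smooth_upto n S (\<lambda>x. dderiv [b] F (G x))"
        using Suc.IH[OF smooth_upto_SucD[OF Suc.prems(1)] smooth_upto_mono[OF Suc.prems(2)]] Suc.prems(3)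
        by simp
      ultimately show "smooth_upto n S (\<lambda>x. (dderiv [v] G x \<bullet> b) *\<^sub>R dderiv [b] F (G x))"
        by (rule smooth_upto_bilinear[OF bounded_bilinear_scaleR])
    qed
    then show "smooth_upto n S (dderiv [v] (\<lambda>x. F (G x)))"
      by (rule smooth_upto_cong) (simp only: eq)
  qed
qed

lemma smooth_on_open: "smooth_on S F \<Longrightarrow> open S"
  by (simp add: smooth_on_def)

lemma smooth_on_localI:
  assumes "open S" "\<And>x. x \<in> S \<Longrightarrow> \<exists>T. open T \<and> x \<in> T \<and> smooth_on T F"
  shows "smooth_on S F"
  using assms unfolding smooth_on_def by blast

lemma smooth_on_cong: "smooth_on S F \<Longrightarrow> (\<And>x. x \<in> S \<Longrightarrow> F x = G x) \<Longrightarrow> smooth_on S G"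
  unfolding smooth_on_iff_smooth_upto by (blast intro: smooth_upto_cong)

lemma smooth_on_subset: "smooth_on S F \<Longrightarrow> T \<subseteq> S \<Longrightarrow> open T \<Longrightarrow> smooth_on T F"
  unfolding smooth_on_iff_smooth_upto by (blast intro: smooth_upto_subset)

lemma smooth_on_const: "open S \<Longrightarrow> smooth_on S (\<lambda>_. c)"
  unfolding smooth_on_iff_smooth_upto by (blast intro: smooth_upto_const)

lemma smooth_on_ident: "open S \<Longrightarrow> smooth_on S (\<lambda>x. x)"
  unfolding smooth_on_iff_smooth_upto by (blast intro: smooth_upto_ident)

lemma smooth_on_linear: "bounded_linear L \<Longrightarrow> smooth_on S F \<Longrightarrow> smooth_on S (\<lambda>x. L (F x))"
  unfolding smooth_on_iff_smooth_upto by (blast intro: smooth_upto_linear)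

lemma smooth_on_diff: "smooth_on S F \<Longrightarrow> smooth_on S G \<Longrightarrow> smooth_on S (\<lambda>x. F x - G x)"
  unfolding smooth_on_iff_smooth_upto by (blast intro: smooth_upto_diff)

lemma smooth_on_bilinear:
  "bounded_bilinear pr \<Longrightarrow> smooth_on S F \<Longrightarrow> smooth_on S G \<Longrightarrow> smooth_on S (\<lambda>x. pr (F x) (G x))"
  unfolding smooth_on_iff_smooth_upto by (blast intro: smooth_upto_bilinear)

lemma smooth_on_compose:
  "smooth_on T F \<Longrightarrow> smooth_on S G \<Longrightarrow> G ` S \<subseteq> T \<Longrightarrow> smooth_on S (\<lambda>x. F (G x))"
  unfolding smooth_on_iff_smooth_upto by (blast intro: smooth_upto_compose)

section \<open>A smooth bump function\<close>

definition flat_exp :: "nat \<Rightarrow> real \<Rightarrow> real" where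
  "flat_exp k t = (if t > 0 then inverse t ^ k * exp (- inverse t) else 0)"

lemma flat_exp_tendsto_0: "(flat_exp k \<longlongrightarrow> 0) (at 0)"
proof (rule filterlim_split_at)
  have "eventually (\<lambda>t. flat_exp k t = 0) (at_left (0::real))"
    using eventually_at_left_real[of "-1" 0] by (rule eventually_mono) (auto simp: flat_exp_def)
  then show "(flat_exp k \<longlongrightarrow> 0) (at_left 0)"
    by (rule tendsto_eventually)
next
  have "eventually (\<lambda>x. x ^ k / exp x = flat_exp k (inverse x)) at_top"
    using eventually_gt_at_top[of 0] by eventually_elim (simp add: flat_exp_def exp_minus field_simps)
  then have "((\<lambda>x. flat_exp k (inverse x)) \<longlongrightarrow> 0) at_top"
    using tendsto_power_div_exp_0 tendsto_cong by fastforce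
  then show "(flat_exp k \<longlongrightarrow> 0) (at_right 0)"
    by (simp add: filterlim_at_right_to_top)
qed

lemma flat_exp_has_derivative:
  "(flat_exp k has_real_derivative flat_exp (k + 2) t - real k * flat_exp (k + 1) t) (at t)"
proof (cases t "0::real" rule: linorder_cases)
  case less
  have "((\<lambda>_. 0) has_real_derivative 0) (at t)"
    by simp
  then have "(flat_exp k has_real_derivative 0) (at t)"
    by (rule has_field_derivative_transform_within_open[where S="{..<0}"])
       (use less in \<open>auto simp: flat_exp_def\<close>)
  then show ?thesis
    using less by (simp add: flat_exp_def)
next
  case equal
  have "(\<lambda>t. (flat_exp k t - flat_exp k 0) / (t - 0)) = flat_exp (Suc k)"
    by (rule ext) (simp add: flat_exp_def field_simps)
  then have "(flat_exp k has_real_derivative 0) (at 0)"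
    unfolding has_field_derivative_iff using flat_exp_tendsto_0[of "Suc k"] by simp
  then show ?thesis
    using equal by (simp add: flat_exp_def)
next
  case greater
  have "((\<lambda>t. inverse t ^ k * exp (- inverse t)) has_real_derivative
         real k * inverse t ^ (k - 1) * (- inverse (t\<^sup>2)) * exp (- inverse t)
         + inverse t ^ k * (exp (- inverse t) * inverse (t\<^sup>2))) (at t)"
    using greater by (auto intro!: derivative_eq_intros simp: power2_eq_square)
  moreover have "real k * inverse t ^ (k - 1) * (- inverse (t\<^sup>2)) * exp (- inverse t)
      + inverse t ^ k * (exp (- inverse t) * inverse (t\<^sup>2))
      = flat_exp (k + 2) t - real k * flat_exp (k + 1) t"
    using greater by (cases k) (simp_all add: flat_exp_def power2_eq_square field_simps)
  ultimately have "((\<lambda>t. inverse t ^ k * exp (- inverse t)) has_real_derivative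
      flat_exp (k + 2) t - real k * flat_exp (k + 1) t) (at t)"
    by simp
  then show ?thesis
    by (rule has_field_derivative_transform_within_open[where S="{0<..}"])
       (use greater in \<open>auto simp: flat_exp_def\<close>)
qed

text \<open>Closed under differentiation by \<open>flat_exp_has_derivative\<close>; this gives smoothness of
  \<^const>\<open>flat_exp\<close> without computing its higher derivatives.\<close>

inductive flat_exp_span :: "(real \<Rightarrow> real) \<Rightarrow> bool" where
  flat_exp_span_base: "flat_exp_span (flat_exp k)"
| flat_exp_span_add: "flat_exp_span F \<Longrightarrow> flat_exp_span G \<Longrightarrow> flat_exp_span (\<lambda>t. F t + G t)"
| flat_exp_span_scale: "flat_exp_span F \<Longrightarrow> flat_exp_span (\<lambda>t. c * F t)"

lemma flat_exp_span_has_derivative: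
  "flat_exp_span F \<Longrightarrow> \<exists>F'. flat_exp_span F' \<and> (\<forall>t. (F has_real_derivative F' t) (at t))"
proof (induction rule: flat_exp_span.induct)
  case (flat_exp_span_base k)
  have "flat_exp_span (\<lambda>t. flat_exp (k + 2) t + (- real k) * flat_exp (k + 1) t)"
    by (intro flat_exp_span.intros)
  then show ?case
    using flat_exp_has_derivative[of k] by fastforce
next
  case (flat_exp_span_add F G)
  then obtain F' G' where "flat_exp_span F'" "\<And>t. (F has_real_derivative F' t) (at t)"
    and "flat_exp_span G'" "\<And>t. (G has_real_derivative G' t) (at t)"
    by blast
  then show ?case
    by (intro exI[of _ "\<lambda>t. F' t + G' t"]) (simp add: flat_exp_span.flat_exp_span_add DERIV_add)
next
  case (flat_exp_span_scale F c)
  then obtain F' where "flat_exp_span F'" "\<And>t. (F has_real_derivative F' t) (at t)"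
    by blast
  then show ?case
    by (intro exI[of _ "\<lambda>t. c * F' t"]) (simp add: flat_exp_span.flat_exp_span_scale DERIV_cmult)
qed

lemma flat_exp_span_dderiv: "flat_exp_span F \<Longrightarrow> flat_exp_span (dderiv vs F)"
proof (induction vs)
  case (Cons v vs)
  then obtain F' where F': "flat_exp_span F'" "\<And>t. (dderiv vs F has_real_derivative F' t) (at t)"
    using flat_exp_span_has_derivative by blast
  have "frechet_derivative (dderiv vs F) (at t) = (\<lambda>h. F' t * h)" for t
    using F'(2) frechet_derivative_at unfolding has_field_derivative_def by metis
  then have "dderiv (v # vs) F = (\<lambda>t. v * F' t)"
    by (simp add: mult.commute)
  then show ?case
    using F'(1) by (simp add: flat_exp_span_scale)
qed simp

lemma smooth_on_flat_exp_span: "flat_exp_span F \<Longrightarrow> smooth_on UNIV F"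
  unfolding smooth_on_def
proof (intro conjI allI ballI open_UNIV)
  fix vs and t :: real
  assume "flat_exp_span F"
  then obtain F' where "(dderiv vs F has_real_derivative F' t) (at t)"
    using flat_exp_span_has_derivative[OF flat_exp_span_dderiv] by blast
  then show "dderiv vs F differentiable (at t)"
    using real_differentiable_def differentiable_def has_field_derivative_imp_has_derivative by blast
qed

definition bump :: "'a::euclidean_space \<Rightarrow> real \<Rightarrow> 'a \<Rightarrow> real" where
  "bump c r x = flat_exp 0 (r\<^sup>2 - (x - c) \<bullet> (x - c))"

lemma smooth_on_bump: "smooth_on UNIV (bump c r)"
proof -
  have shift: "smooth_on UNIV (\<lambda>x. x - c)"
    by (intro smooth_on_diff smooth_on_ident smooth_on_const) simp_all
  have "smooth_on UNIV (\<lambda>x. r\<^sup>2 - (x - c) \<bullet> (x - c))"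
    by (rule smooth_on_diff[OF smooth_on_const smooth_on_bilinear[OF bounded_bilinear_inner shift shift]]) simp
  then show ?thesis
    unfolding bump_def by (rule smooth_on_compose[OF smooth_on_flat_exp_span[OF flat_exp_span_base]]) simp
qed

lemma bump_center: "r > 0 \<Longrightarrow> bump c r c \<noteq> 0"
  by (simp add: bump_def flat_exp_def)

lemma bump_eq_0:
  assumes "r > 0" "x \<notin> ball c r"
  shows "bump c r x = 0"
proof -
  have "r\<^sup>2 \<le> (norm (x - c))\<^sup>2"
    using assms by (intro power_mono) (auto simp: dist_norm norm_minus_commute)
  then show ?thesis
    by (simp add: bump_def flat_exp_def power2_norm_eq_inner)
qed

section \<open>Smooth maps on a manifold and sections of a bundle\<close>

lemma smooth_manifold_chart:
  assumes "smooth_manifold X Atl" "(V, \<phi>) \<in> Atl"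
  shows "openin X V" "open (\<phi> ` V)" "homeomorphic_map (subtopology X V) (top_of_set (\<phi> ` V)) \<phi>"
  using assms unfolding smooth_manifold_def by auto

lemma smooth_manifold_transition:
  assumes "smooth_manifold X Atl" "(V, \<phi>) \<in> Atl" "(W, \<psi>) \<in> Atl"
  shows "smooth_on (\<phi> ` (V \<inter> W)) (\<psi> \<circ> inv_into V \<phi>)"
  using assms unfolding smooth_manifold_def by auto

lemma chart_inj_on:
  assumes "smooth_manifold X Atl" "(V, \<phi>) \<in> Atl"
  shows "inj_on \<phi> V"
  using homeomorphic_imp_injective_map[OF smooth_manifold_chart(3)[OF assms]]
    openin_subset[OF smooth_manifold_chart(1)[OF assms]]
  by (simp add: Int_absorb1)

lemma open_chart_image:
  assumes "smooth_manifold X Atl" "(V, \<phi>) \<in> Atl" "openin X S"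
  shows "open (\<phi> ` (V \<inter> S))"
proof -
  note chart = smooth_manifold_chart[OF assms(1,2)]
  have "openin (subtopology X V) (V \<inter> S)"
    using assms(3) by (auto simp: openin_subtopology)
  then have "openin (top_of_set (\<phi> ` V)) (\<phi> ` (V \<inter> S))"
    using homeomorphic_map_openness_eq[OF chart(3)] by blast
  then show ?thesis
    using chart(2) openin_open_trans by blast
qed

lemma closedin_chart_preimage:
  assumes "smooth_manifold X Atl" "(V, \<phi>) \<in> Atl" "compact C" "C \<subseteq> \<phi> ` V"
  shows "closedin X {q \<in> V. \<phi> q \<in> C}"
proof -
  have X: "topspace X = UNIV" "Hausdorff_space X"
    using assms(1) unfolding smooth_manifold_def by blast+
  have "\<phi> ` {q \<in> V. \<phi> q \<in> C} = C"
    using assms(4) by blast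
  moreover have "compactin (top_of_set (\<phi> ` V)) C"
    using assms(3,4) by (simp add: compactin_subtopology compactin_euclidean_iff)
  moreover have "{q \<in> V. \<phi> q \<in> C} \<subseteq> topspace (subtopology X V)"
    using X(1) by auto
  ultimately have "compactin (subtopology X V) {q \<in> V. \<phi> q \<in> C}"
    using homeomorphic_map_compactness[OF smooth_manifold_chart(3)[OF assms(1,2)]] by metis
  then show ?thesis
    using compactin_imp_closedin[OF X(2)] by (simp add: compactin_subtopology)
qed

lemma smooth_map_onI:
  "(\<And>V \<phi>. (V, \<phi>) \<in> Atl \<Longrightarrow> smooth_on (\<phi> ` (V \<inter> S)) (F \<circ> inv_into V \<phi>)) \<Longrightarrow> smooth_map_on Atl S F"
  unfolding smooth_map_on_def by blast

lemma smooth_map_onD: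
  "smooth_map_on Atl S F \<Longrightarrow> (V, \<phi>) \<in> Atl \<Longrightarrow> smooth_on (\<phi> ` (V \<inter> S)) (F \<circ> inv_into V \<phi>)"
  unfolding smooth_map_on_def by blast

lemma smooth_map_on_cong:
  assumes "smooth_manifold X Atl" "smooth_map_on Atl S F" "\<And>q. q \<in> S \<Longrightarrow> F q = G q"
  shows "smooth_map_on Atl S G"
proof (rule smooth_map_onI)
  fix V \<phi>
  assume chart: "(V, \<phi>) \<in> Atl"
  show "smooth_on (\<phi> ` (V \<inter> S)) (G \<circ> inv_into V \<phi>)"
  proof (rule smooth_on_cong[OF smooth_map_onD[OF assms(2) chart]])
    fix y
    assume "y \<in> \<phi> ` (V \<inter> S)"
    then obtain q where "q \<in> V \<inter> S" "y = \<phi> q"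
      by blast
    then show "(F \<circ> inv_into V \<phi>) y = (G \<circ> inv_into V \<phi>) y"
      using assms(3) chart_inj_on[OF assms(1) chart] by simp
  qed
qed

lemma smooth_map_on_subset:
  assumes "smooth_manifold X Atl" "smooth_map_on Atl S F" "openin X T" "T \<subseteq> S"
  shows "smooth_map_on Atl T F"
proof (rule smooth_map_onI)
  fix V \<phi>
  assume chart: "(V, \<phi>) \<in> Atl"
  show "smooth_on (\<phi> ` (V \<inter> T)) (F \<circ> inv_into V \<phi>)"
    by (rule smooth_on_subset[OF smooth_map_onD[OF assms(2) chart]])
      (use assms(4) open_chart_image[OF assms(1) chart assms(3)] in auto)
qed

lemma smooth_map_on_linear:
  assumes "bounded_linear L" "smooth_map_on Atl S F"
  shows "smooth_map_on Atl S (\<lambda>q. L (F q))"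
proof (rule smooth_map_onI)
  fix V \<phi>
  assume "(V, \<phi>) \<in> Atl"
  from smooth_on_linear[OF assms(1) smooth_map_onD[OF assms(2) this]]
  show "smooth_on (\<phi> ` (V \<inter> S)) ((\<lambda>q. L (F q)) \<circ> inv_into V \<phi>)"
    by (simp add: o_def)
qed

lemma smooth_map_on_diff:
  assumes "smooth_map_on Atl S F" "smooth_map_on Atl S G"
  shows "smooth_map_on Atl S (\<lambda>q. F q - G q)"
proof (rule smooth_map_onI)
  fix V \<phi>
  assume "(V, \<phi>) \<in> Atl"
  from smooth_on_diff[OF smooth_map_onD[OF assms(1) this] smooth_map_onD[OF assms(2) this]]
  show "smooth_on (\<phi> ` (V \<inter> S)) ((\<lambda>q. F q - G q) \<circ> inv_into V \<phi>)"
    by (simp add: o_def)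
qed

lemma smooth_map_on_scaleR:
  assumes "smooth_map_on Atl S f" "smooth_map_on Atl T F" "T \<subseteq> S"
  shows "smooth_map_on Atl T (\<lambda>q. f q *\<^sub>R F q)"
proof (rule smooth_map_onI)
  fix V \<phi>
  assume chart: "(V, \<phi>) \<in> Atl"
  have "smooth_on (\<phi> ` (V \<inter> T)) (f \<circ> inv_into V \<phi>)"
    by (rule smooth_on_subset[OF smooth_map_onD[OF assms(1) chart]])
      (use assms(3) smooth_on_open[OF smooth_map_onD[OF assms(2) chart]] in auto)
  from smooth_on_bilinear[OF bounded_bilinear_scaleR this smooth_map_onD[OF assms(2) chart]]
  show "smooth_on (\<phi> ` (V \<inter> T)) ((\<lambda>q. f q *\<^sub>R F q) \<circ> inv_into V \<phi>)"
    by (simp add: o_def)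
qed

lemma smooth_map_on_chart:
  assumes "smooth_manifold X Atl" "(V, \<phi>) \<in> Atl" "smooth_on UNIV \<beta>"
  shows "smooth_map_on Atl V (\<lambda>q. \<beta> (\<phi> q))"
proof (rule smooth_map_onI)
  fix W \<psi>
  assume "(W, \<psi>) \<in> Atl"
  from smooth_on_compose[OF assms(3) smooth_manifold_transition[OF assms(1) this assms(2)]]
  show "smooth_on (\<psi> ` (W \<inter> V)) ((\<lambda>q. \<beta> (\<phi> q)) \<circ> inv_into W \<psi>)"
    by (simp add: o_def)
qed

lemma smooth_map_on_supported:
  assumes "smooth_manifold X Atl" "openin X S" "openin X D" "closedin X K" "K \<subseteq> D"
    and "smooth_map_on Atl (S \<inter> D) F" "\<And>q. q \<in> S - K \<Longrightarrow> F q = 0"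
  shows "smooth_map_on Atl S F"
proof (rule smooth_map_onI)
  fix W \<psi>
  assume chart: "(W, \<psi>) \<in> Atl"
  show "smooth_on (\<psi> ` (W \<inter> S)) (F \<circ> inv_into W \<psi>)"
  proof (rule smooth_on_localI[OF open_chart_image[OF assms(1) chart assms(2)]])
    fix y
    assume "y \<in> \<psi> ` (W \<inter> S)"
    then obtain q where q: "q \<in> W" "q \<in> S" "y = \<psi> q"
      by blast
    show "\<exists>T. open T \<and> y \<in> T \<and> smooth_on T (F \<circ> inv_into W \<psi>)"
    proof (cases "q \<in> K")
      case True
      then show ?thesis
        using q assms(5) smooth_map_onD[OF assms(6) chart] smooth_on_open by blast
    next
      case False
      have "openin X (S - K)"
        using assms(2,4) by blast
      moreover have "smooth_on (\<psi> ` (W \<inter> (S - K))) (F \<circ> inv_into W \<psi>)"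
      proof (rule smooth_on_cong[OF smooth_on_const])
        show "open (\<psi> ` (W \<inter> (S - K)))"
          using open_chart_image[OF assms(1) chart] \<open>openin X (S - K)\<close> .
        fix y'
        assume "y' \<in> \<psi> ` (W \<inter> (S - K))"
        then show "0 = (F \<circ> inv_into W \<psi>) y'"
          using assms(7) chart_inj_on[OF assms(1) chart] by auto
      qed
      ultimately show ?thesis
        using q False open_chart_image[OF assms(1) chart] by blast
    qed
  qed
qed

lemma sectionsD:
  assumes "s \<in> sections Atl U g"
  shows "\<And>i p. p \<notin> U i \<Longrightarrow> s i p = 0" "\<And>i. smooth_map_on Atl (U i) (s i)"
    and "\<And>i j p. p \<in> U i \<inter> U j \<Longrightarrow> s i p = blinfun_apply (g i j p) (s j p)"
  using assms unfolding sections_def by auto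

lemma sections_smult:
  assumes "smooth_fun Atl f" "s \<in> sections Atl U g"
  shows "sec_smult f s \<in> sections Atl U g"
  unfolding sections_def sec_smult_def mem_Collect_eq
proof (intro conjI allI impI)
  note s = sectionsD[OF assms(2)]
  fix i
  show "smooth_map_on Atl (U i) (\<lambda>p. f p *\<^sub>R s i p)"
    using smooth_map_on_scaleR[OF assms(1)[unfolded smooth_fun_def] s(2)] by simp
  fix p
  show "p \<notin> U i \<Longrightarrow> f p *\<^sub>R s i p = 0"
    using s(1) by simp
  fix j
  show "p \<in> U i \<inter> U j \<Longrightarrow> f p *\<^sub>R s i p = blinfun_apply (g i j p) (f p *\<^sub>R s j p)"
    using s(3)[of p i j] by (simp add: blinfun.scaleR_right)
qed

lemma sections_diff:
  assumes "s \<in> sections Atl U g" "t \<in> sections Atl U g"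
  shows "sec_diff s t \<in> sections Atl U g"
  unfolding sections_def sec_diff_def mem_Collect_eq
proof (intro conjI allI impI)
  note s = sectionsD[OF assms(1)] and t = sectionsD[OF assms(2)]
  fix i
  show "smooth_map_on Atl (U i) (\<lambda>p. s i p - t i p)"
    using smooth_map_on_diff[OF s(2) t(2)] .
  fix p
  show "p \<notin> U i \<Longrightarrow> s i p - t i p = 0"
    using s(1) t(1) by simp
  fix j
  show "p \<in> U i \<inter> U j \<Longrightarrow> s i p - t i p = blinfun_apply (g i j p) (s j p - t j p)"
    using s(3)[of p i j] t(3)[of p i j] by (simp add: blinfun.diff_right)
qed

lemma smooth_bump_at:
  assumes manifold: "smooth_manifold X Atl" and "openin X N" "p \<in> N"
  obtains \<rho> :: "'M \<Rightarrow> real" and K where "closedin X K" "K \<subseteq> N" "smooth_map_on Atl N \<rho>" "\<rho> p \<noteq> 0"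
    and "\<And>q. q \<notin> K \<Longrightarrow> \<rho> q = 0"
proof -
  obtain V \<phi> where chart: "(V, \<phi>) \<in> Atl" and "p \<in> V"
    using manifold unfolding smooth_manifold_def by force
  have "open (\<phi> ` (V \<inter> N))"
    by (rule open_chart_image[OF manifold chart assms(2)])
  then obtain r where "r > 0" and r: "cball (\<phi> p) r \<subseteq> \<phi> ` (V \<inter> N)"
    using \<open>p \<in> V\<close> \<open>p \<in> N\<close> open_contains_cball by blast
  define K where "K = {q \<in> V. \<phi> q \<in> cball (\<phi> p) r}"
  define \<rho> where "\<rho> = (\<lambda>q. if q \<in> V then bump (\<phi> p) r (\<phi> q) else 0)"
  have "closedin X K"
    unfolding K_def using r by (intro closedin_chart_preimage[OF manifold chart]) auto
  have "K \<subseteq> V \<inter> N"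
    using r chart_inj_on[OF manifold chart] unfolding K_def by (auto dest: inj_onD)
  have \<rho>_eq_0: "\<rho> q = 0" if "q \<notin> K" for q
    using that unfolding \<rho>_def K_def by (auto intro!: bump_eq_0[OF \<open>r > 0\<close>])
  have "openin X (V \<inter> N)" and "openin X (N \<inter> (V \<inter> N))"
    by (intro openin_Int smooth_manifold_chart(1)[OF manifold chart] assms(2))+
  have "smooth_map_on Atl (N \<inter> (V \<inter> N)) (\<lambda>q. bump (\<phi> p) r (\<phi> q))"
    by (rule smooth_map_on_subset[OF manifold smooth_map_on_chart[OF manifold chart smooth_on_bump]
          \<open>openin X (N \<inter> (V \<inter> N))\<close>]) blast
  then have "smooth_map_on Atl (N \<inter> (V \<inter> N)) \<rho>"
    by (rule smooth_map_on_cong[OF manifold]) (simp add: \<rho>_def)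
  then have smooth: "smooth_map_on Atl N \<rho>"
    by (rule smooth_map_on_supported[OF manifold assms(2) \<open>openin X (V \<inter> N)\<close> \<open>closedin X K\<close>
          \<open>K \<subseteq> V \<inter> N\<close>]) (simp add: \<rho>_eq_0)
  have "\<rho> p \<noteq> 0"
    using bump_center[OF \<open>r > 0\<close>] \<open>p \<in> V\<close> by (simp add: \<rho>_def)
  have "K \<subseteq> N"
    using \<open>K \<subseteq> V \<inter> N\<close> by blast
  show ?thesis
    by (rule that[OF \<open>closedin X K\<close> \<open>K \<subseteq> N\<close> smooth \<open>\<rho> p \<noteq> 0\<close> \<rho>_eq_0])
qed

definition cutoff_section ::
  "('i \<Rightarrow> 'M set) \<Rightarrow> ('i \<Rightarrow> 'i \<Rightarrow> 'M \<Rightarrow> ('v::real_normed_vector \<Rightarrow>\<^sub>L 'v)) \<Rightarrow> 'i \<Rightarrow> ('M \<Rightarrow> real) \<Rightarrow> 'v \<Rightarrow>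
   'i \<Rightarrow> 'M \<Rightarrow> 'v" where
  "cutoff_section U g i \<rho> e = (\<lambda>j q. if q \<in> U i \<inter> U j then \<rho> q *\<^sub>R blinfun_apply (g j i q) e else 0)"

lemma cutoff_section_in_sections:
  assumes VB: "vector_bundle X Atl U g"
    and "closedin X K" "K \<subseteq> U i" "smooth_map_on Atl (U i) \<rho>" "\<And>q. q \<notin> K \<Longrightarrow> \<rho> q = 0"
  shows "cutoff_section U g i \<rho> e \<in> sections Atl U g"
proof -
  have manifold: "smooth_manifold X Atl" and open_U: "\<And>j. openin X (U j)"
    and smooth_g: "\<And>j k. smooth_map_on Atl (U j \<inter> U k) (g j k)"
    and cocycle: "\<And>j k l q. q \<in> U j \<inter> U k \<inter> U l \<Longrightarrow> g j k q o\<^sub>L g k l q = g j l q"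
    using VB unfolding vector_bundle_def by auto
  have smooth: "smooth_map_on Atl (U j) (cutoff_section U g i \<rho> e j)" for j
  proof (rule smooth_map_on_supported[OF manifold open_U open_U assms(2,3)])
    have "smooth_map_on Atl (U j \<inter> U i) (\<lambda>q. \<rho> q *\<^sub>R blinfun_apply (g j i q) e)"
      using smooth_map_on_scaleR[OF assms(4) smooth_map_on_linear[OF blinfun.bounded_linear_left smooth_g]]
      by blast
    then show "smooth_map_on Atl (U j \<inter> U i) (cutoff_section U g i \<rho> e j)"
      by (rule smooth_map_on_cong[OF manifold]) (auto simp: cutoff_section_def)
  next
    fix q
    assume "q \<in> U j - K"
    then show "cutoff_section U g i \<rho> e j q = 0"
      using assms(5) by (simp add: cutoff_section_def)
  qed
  have "cutoff_section U g i \<rho> e j q = blinfun_apply (g j k q) (cutoff_section U g i \<rho> e k q)"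
    if "q \<in> U j \<inter> U k" for j k q
  proof (cases "q \<in> U i")
    case True
    then have "blinfun_apply (g j k q) (blinfun_apply (g k i q) e) = blinfun_apply (g j i q) e"
      using cocycle[of q j k i] that by (metis IntI blinfun_apply_blinfun_compose)
    then show ?thesis
      using True that by (simp add: cutoff_section_def blinfun.scaleR_right)
  qed (simp add: cutoff_section_def blinfun.zero_right)
  with smooth show ?thesis
    unfolding sections_def by (auto simp: cutoff_section_def)
qed

lemma sections_nonzero_at:
  fixes g :: "'i \<Rightarrow> 'i \<Rightarrow> 'M \<Rightarrow> ('v::euclidean_space \<Rightarrow>\<^sub>L 'v)"
  assumes VB: "vector_bundle X Atl U g"
  obtains z i where "z \<in> sections Atl U g" "z i p \<noteq> 0"
proof -
  have manifold: "smooth_manifold X Atl" and open_U: "\<And>i. openin X (U i)" and "(\<Union>i. U i) = UNIV"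
    and g_id: "\<And>i p. p \<in> U i \<Longrightarrow> g i i p = id_blinfun"
    using VB unfolding vector_bundle_def by auto
  then obtain i where "p \<in> U i"
    by blast
  obtain \<rho> :: "'M \<Rightarrow> real" and K where "closedin X K" "K \<subseteq> U i" "smooth_map_on Atl (U i) \<rho>" "\<rho> p \<noteq> 0"
    and "\<And>q. q \<notin> K \<Longrightarrow> \<rho> q = 0"
    by (rule smooth_bump_at[OF manifold open_U \<open>p \<in> U i\<close>]) (rule that)
  then have "cutoff_section U g i \<rho> e \<in> sections Atl U g" for e :: 'v
    by (intro cutoff_section_in_sections[OF VB])
  moreover obtain e :: 'v where "e \<in> Basis"
    using nonempty_Basis by blast
  then have "cutoff_section U g i \<rho> e i p \<noteq> 0"
    using \<open>p \<in> U i\<close> \<open>\<rho> p \<noteq> 0\<close> g_id by (simp add: cutoff_section_def nonzero_Basis)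
  ultimately show ?thesis
    using that by blast
qed

section \<open>Connections and curvature\<close>

locale anchored_connection =
  fixes X :: "'M topology"
    and Atl :: "('M set \<times> ('M \<Rightarrow> 'e::euclidean_space)) set"
    and U :: "'i \<Rightarrow> 'M set"
    and g :: "'i \<Rightarrow> 'i \<Rightarrow> 'M \<Rightarrow> ('v::euclidean_space \<Rightarrow>\<^sub>L 'v)"
    and a :: "('i \<Rightarrow> 'M \<Rightarrow> 'v) \<Rightarrow> ('M \<Rightarrow> real) \<Rightarrow> ('M \<Rightarrow> real)"
    and nabla :: "('i \<Rightarrow> 'M \<Rightarrow> 'v) \<Rightarrow> ('i \<Rightarrow> 'M \<Rightarrow> 'v) \<Rightarrow> ('i \<Rightarrow> 'M \<Rightarrow> 'v)"
  assumes anchored: "anchored_bundle X Atl U g a"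
    and connection: "connection X Atl U g a nabla"
begin

abbreviation \<Gamma> where "\<Gamma> \<equiv> sections Atl U g"

lemma nabla_in_sections: "x \<in> \<Gamma> \<Longrightarrow> y \<in> \<Gamma> \<Longrightarrow> nabla x y \<in> \<Gamma>"
  using connection unfolding connection_def Let_def by blast

lemma nabla_add_left:
  "x \<in> \<Gamma> \<Longrightarrow> x' \<in> \<Gamma> \<Longrightarrow> y \<in> \<Gamma> \<Longrightarrow> nabla (sec_add x x') y = sec_add (nabla x y) (nabla x' y)"
  using connection unfolding connection_def Let_def by blast

lemma nabla_add_right:
  "x \<in> \<Gamma> \<Longrightarrow> y \<in> \<Gamma> \<Longrightarrow> y' \<in> \<Gamma> \<Longrightarrow> nabla x (sec_add y y') = sec_add (nabla x y) (nabla x y')"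
  using connection unfolding connection_def Let_def by blast

lemma nabla_scale_left: "x \<in> \<Gamma> \<Longrightarrow> y \<in> \<Gamma> \<Longrightarrow> nabla (sec_scale c x) y = sec_scale c (nabla x y)"
  using connection unfolding connection_def Let_def by blast

lemma nabla_scale_right: "x \<in> \<Gamma> \<Longrightarrow> y \<in> \<Gamma> \<Longrightarrow> nabla x (sec_scale c y) = sec_scale c (nabla x y)"
  using connection unfolding connection_def Let_def by blast

lemma nabla_smult_left:
  "smooth_fun Atl f \<Longrightarrow> x \<in> \<Gamma> \<Longrightarrow> y \<in> \<Gamma> \<Longrightarrow> nabla (sec_smult f x) y = sec_smult f (nabla x y)"
  using connection unfolding connection_def Let_def by blast

lemma nabla_Leibniz:
  "smooth_fun Atl f \<Longrightarrow> x \<in> \<Gamma> \<Longrightarrow> y \<in> \<Gamma> \<Longrightarrow>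
    nabla x (sec_smult f y) = sec_add (sec_smult (a x f) y) (sec_smult f (nabla x y))"
  using connection unfolding connection_def Let_def by blast

lemma anchor_smooth: "x \<in> \<Gamma> \<Longrightarrow> smooth_fun Atl f \<Longrightarrow> smooth_fun Atl (a x f)"
  using anchored unfolding anchored_bundle_def vector_field_def by blast

lemma bracket_in_sections: "x \<in> \<Gamma> \<Longrightarrow> y \<in> \<Gamma> \<Longrightarrow> nabla_bracket nabla x y \<in> \<Gamma>"
  unfolding nabla_bracket_def by (intro sections_diff nabla_in_sections)

lemma curvature_add:
  assumes "x \<in> \<Gamma>" "y \<in> \<Gamma>" "z \<in> \<Gamma>" "z' \<in> \<Gamma>"
  shows "curvature nabla x y (sec_add z z') = sec_add (curvature nabla x y z) (curvature nabla x y z')"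
  using assms bracket_in_sections[OF assms(1,2)]
  by (simp add: curvature_def nabla_add_right nabla_in_sections)
     (auto simp: sec_add_def sec_diff_def algebra_simps)

lemma curvature_smult:
  assumes "x \<in> \<Gamma>" "y \<in> \<Gamma>" "z \<in> \<Gamma>" "smooth_fun Atl f"
  shows "curvature nabla x y (sec_smult f z) =
    sec_add (sec_smult (\<lambda>p. a x (a y f) p - a y (a x f) p - a (nabla_bracket nabla x y) f p) z)
      (sec_smult f (curvature nabla x y z))"
proof -
  have smooth: "smooth_fun Atl (a x f)" "smooth_fun Atl (a y f)"
    using anchor_smooth assms by blast+
  have in_sections: "nabla x z \<in> \<Gamma>" "nabla y z \<in> \<Gamma>" "nabla_bracket nabla x y \<in> \<Gamma>"
    "sec_smult (a y f) z \<in> \<Gamma>" "sec_smult f (nabla y z) \<in> \<Gamma>"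
    "sec_smult (a x f) z \<in> \<Gamma>" "sec_smult f (nabla x z) \<in> \<Gamma>"
    using assms smooth by (simp_all add: sections_smult nabla_in_sections bracket_in_sections)
  have xy: "nabla x (nabla y (sec_smult f z)) =
      sec_add (sec_add (sec_smult (a x (a y f)) z) (sec_smult (a y f) (nabla x z)))
        (sec_add (sec_smult (a x f) (nabla y z)) (sec_smult f (nabla x (nabla y z))))"
    by (simp add: assms smooth in_sections nabla_Leibniz nabla_add_right)
  have yx: "nabla y (nabla x (sec_smult f z)) =
      sec_add (sec_add (sec_smult (a y (a x f)) z) (sec_smult (a x f) (nabla y z)))
        (sec_add (sec_smult (a y f) (nabla x z)) (sec_smult f (nabla y (nabla x z))))"
    by (simp add: assms smooth in_sections nabla_Leibniz nabla_add_right)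
  have bracket: "nabla (nabla_bracket nabla x y) (sec_smult f z) =
      sec_add (sec_smult (a (nabla_bracket nabla x y) f) z) (sec_smult f (nabla (nabla_bracket nabla x y) z))"
    by (simp add: assms in_sections nabla_Leibniz)
  show ?thesis
    unfolding curvature_def xy yx bracket
    by (auto simp: sec_add_def sec_diff_def sec_smult_def algebra_simps)
qed

lemma curvature_smult_iff_anchor_bracket:
  assumes "x \<in> \<Gamma>" "y \<in> \<Gamma>"
  shows "(\<forall>f z. smooth_fun Atl f \<longrightarrow> z \<in> \<Gamma> \<longrightarrow>
            curvature nabla x y (sec_smult f z) = sec_smult f (curvature nabla x y z))
    \<longleftrightarrow> (\<forall>h. smooth_fun Atl h \<longrightarrow> a (nabla_bracket nabla x y) h = (\<lambda>p. a x (a y h) p - a y (a x h) p))"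
proof
  assume linear: "\<forall>f z. smooth_fun Atl f \<longrightarrow> z \<in> \<Gamma> \<longrightarrow>
    curvature nabla x y (sec_smult f z) = sec_smult f (curvature nabla x y z)"
  show "\<forall>h. smooth_fun Atl h \<longrightarrow> a (nabla_bracket nabla x y) h = (\<lambda>p. a x (a y h) p - a y (a x h) p)"
  proof (intro allI impI ext)
    fix h p
    assume h: "smooth_fun Atl h"
    define c where "c = (\<lambda>p. a x (a y h) p - a y (a x h) p - a (nabla_bracket nabla x y) h p)"
    have "vector_bundle X Atl U g"
      using anchored unfolding anchored_bundle_def by blast
    then obtain z i where z: "z \<in> \<Gamma>" "z i p \<noteq> 0"
      by (rule sections_nonzero_at)
    have "sec_add (sec_smult c z) (sec_smult h (curvature nabla x y z)) = sec_smult h (curvature nabla x y z)"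
      using curvature_smult[OF assms z(1) h] linear h z(1) unfolding c_def by simp
    then have "sec_add (sec_smult c z) (sec_smult h (curvature nabla x y z)) i p =
        sec_smult h (curvature nabla x y z) i p"
      by simp
    then have "c p *\<^sub>R z i p = 0"
      by (simp add: sec_add_def sec_smult_def)
    then show "a (nabla_bracket nabla x y) h p = a x (a y h) p - a y (a x h) p"
      using z(2) by (simp add: c_def)
  qed
next
  assume anchor: "\<forall>h. smooth_fun Atl h \<longrightarrow>
    a (nabla_bracket nabla x y) h = (\<lambda>p. a x (a y h) p - a y (a x h) p)"
  show "\<forall>f z. smooth_fun Atl f \<longrightarrow> z \<in> \<Gamma> \<longrightarrow>
      curvature nabla x y (sec_smult f z) = sec_smult f (curvature nabla x y z)"
  proof (intro allI impI)
    fix f z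
    assume f: "smooth_fun Atl f" and z: "z \<in> \<Gamma>"
    have "(\<lambda>p. a x (a y f) p - a y (a x f) p - a (nabla_bracket nabla x y) f p) = (\<lambda>_. 0)"
      using anchor f by simp
    then show "curvature nabla x y (sec_smult f z) = sec_smult f (curvature nabla x y z)"
      unfolding curvature_smult[OF assms z f] by (simp add: sec_add_def sec_smult_def)
  qed
qed

lemma bracket_skew: "nabla_bracket nabla x y = sec_scale (-1) (nabla_bracket nabla y x)"
  by (simp add: nabla_bracket_def sec_diff_def sec_scale_def)

lemma bracket_add_right:
  "x \<in> \<Gamma> \<Longrightarrow> y \<in> \<Gamma> \<Longrightarrow> y' \<in> \<Gamma> \<Longrightarrow>
    nabla_bracket nabla x (sec_add y y') = sec_add (nabla_bracket nabla x y) (nabla_bracket nabla x y')"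
  by (simp add: nabla_bracket_def nabla_add_left nabla_add_right) (auto simp: sec_add_def sec_diff_def algebra_simps)

lemma bracket_scale_right:
  "x \<in> \<Gamma> \<Longrightarrow> y \<in> \<Gamma> \<Longrightarrow> nabla_bracket nabla x (sec_scale c y) = sec_scale c (nabla_bracket nabla x y)"
  by (simp add: nabla_bracket_def nabla_scale_left nabla_scale_right)
     (auto simp: sec_scale_def sec_diff_def algebra_simps)

lemma bracket_Leibniz:
  "smooth_fun Atl f \<Longrightarrow> x \<in> \<Gamma> \<Longrightarrow> y \<in> \<Gamma> \<Longrightarrow>
    nabla_bracket nabla x (sec_smult f y) = sec_add (sec_smult f (nabla_bracket nabla x y)) (sec_smult (a x f) y)"
  by (simp add: nabla_bracket_def nabla_Leibniz nabla_smult_left)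
     (auto simp: sec_add_def sec_smult_def sec_diff_def algebra_simps)

lemma dull_algebroid_iff_anchor_bracket:
  "dull_algebroid X Atl U g (nabla_bracket nabla) a \<longleftrightarrow>
    (\<forall>x\<in>\<Gamma>. \<forall>y\<in>\<Gamma>. \<forall>h. smooth_fun Atl h \<longrightarrow>
      a (nabla_bracket nabla x y) h = (\<lambda>p. a x (a y h) p - a y (a x h) p))"
  unfolding dull_algebroid_def Let_def
  using anchored bracket_in_sections bracket_add_right bracket_scale_right bracket_Leibniz
  by (simp add: bracket_skew[THEN eqTrueI]) \<comment> \<open>as a rewrite rule, \<open>bracket_skew\<close> itself would loop\<close>

end

theorem proposition2p5:
  fixes X :: "'M topology"
    and Atl :: "('M set \<times> ('M \<Rightarrow> 'e::euclidean_space)) set"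
    and U :: "'i \<Rightarrow> 'M set"
    and g :: "'i \<Rightarrow> 'i \<Rightarrow> 'M \<Rightarrow> ('v::euclidean_space \<Rightarrow>\<^sub>L 'v)"
    and a :: "('i \<Rightarrow> 'M \<Rightarrow> 'v) \<Rightarrow> ('M \<Rightarrow> real) \<Rightarrow> ('M \<Rightarrow> real)"
    and nabla :: "('i \<Rightarrow> 'M \<Rightarrow> 'v) \<Rightarrow> ('i \<Rightarrow> 'M \<Rightarrow> 'v) \<Rightarrow> ('i \<Rightarrow> 'M \<Rightarrow> 'v)"
  assumes "anchored_bundle X Atl U g a"
    and "connection X Atl U g a nabla"
  shows "(\<forall>x \<in> sections Atl U g. \<forall>y \<in> sections Atl U g.
            (\<forall>z \<in> sections Atl U g. \<forall>z' \<in> sections Atl U g.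
               curvature nabla x y (sec_add z z') = sec_add (curvature nabla x y z) (curvature nabla x y z')) \<and>
            (\<forall>f z. smooth_fun Atl f \<longrightarrow> z \<in> sections Atl U g \<longrightarrow>
               curvature nabla x y (sec_smult f z) = sec_smult f (curvature nabla x y z)))
         \<longleftrightarrow> dull_algebroid X Atl U g (nabla_bracket nabla) a"
proof -
  interpret anchored_connection X Atl U g a nabla
    using assms by unfold_locales
  show ?thesis
    unfolding dull_algebroid_iff_anchor_bracket
    using curvature_add curvature_smult_iff_anchor_bracket by blast
qed

end
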